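(* Let $K$ be a finitely generated abelian group and $S=\mathbb{K}[T_1,\dots,T_r]$ a $K$-graded polynomial ring with homogeneous variables whose grading is effective and pointed, let $I\subseteq S$ be a homogeneous ideal, and let $G:=\operatorname{Aut}_K(S)$. Then the vector subspaces $V:=\bigoplus_{w\in\Omega_S}S_w$ and $W:=\bigoplus_{u\in\Omega_I}S_u$ of $S$ are finite-dimensional, $V$ is invariant under the linear action of $G$ on $S$, and the induced representation $G\to\operatorname{GL}(V)$ is faithful.
   Context: $\mathbb{K}$ algebraically closed of characteristic zero. $\operatorname{Aut}_K(S)$ is the group of graded automorphisms $(\varphi,\psi)$ ($\varphi(S_w)=S_{\psi(w)}$, $\psi\in\operatorname{Aut}(K)$), acting on $S$ by $f\mapsto\varphi(f)$. Effective: $\omega(S)=\{w;\ S_w\ne0\}$ generates $K$; pointed: $S_0=\mathbb{K}$ and the cone generated by $\omega(S)$ in $K\otimes\mathbb{Q}$ contains no line. $w'\le w$ iff $w-w'\in\omega(S)$. $\Omega_S:=\{w\in\omega(S);\ S_w\not\subseteq S_{<w}\}$ where $S_{<w}$ is the subalgebra generated by all $S_{w'}$ with $w'<w$; for a homogeneous ideal $I$, $\Omega_I:=\{w;\ I_w\not\subseteq I_{<w}\}$ where $I_{<w}$ is the ideal generated by all $I_{w'}=I\cap S_{w'}$, $w'<w$. *)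

theory Defs
  imports "HOL-Library.Poly_Mapping" "HOL-Computational_Algebra.Polynomial"
begin

type_synonym ('v, 'k) mpoly_pm = "('v \<Rightarrow>\<^sub>0 nat) \<Rightarrow>\<^sub>0 'k"

definition nsmul :: "nat \<Rightarrow> 'g::ab_group_add \<Rightarrow> 'g" where
  "nsmul n x = (\<Sum>_<n. x)"

definition zsmul :: "int \<Rightarrow> 'g::ab_group_add \<Rightarrow> 'g" where
  "zsmul z x = (if z \<ge> 0 then nsmul (nat z) x else - nsmul (nat (- z)) x)"

inductive_set gen_subgroup :: "'g::ab_group_add set \<Rightarrow> 'g set" for A where
  gs_zero: "0 \<in> gen_subgroup A"
| gs_gen: "a \<in> A \<Longrightarrow> a \<in> gen_subgroup A"
| gs_add: "a \<in> gen_subgroup A \<Longrightarrow> b \<in> gen_subgroup A \<Longrightarrow> a + b \<in> gen_subgroup A"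
| gs_neg: "a \<in> gen_subgroup A \<Longrightarrow> - a \<in> gen_subgroup A"

definition fin_gen_group :: "'g::ab_group_add itself \<Rightarrow> bool" where
  "fin_gen_group _ \<longleftrightarrow> (\<exists>F::'g set. finite F \<and> gen_subgroup F = UNIV)"

definition mdeg :: "('v::finite \<Rightarrow> 'g::ab_group_add) \<Rightarrow> ('v \<Rightarrow>\<^sub>0 nat) \<Rightarrow> 'g" where
  "mdeg dg m = (\<Sum>v\<in>UNIV. nsmul (Poly_Mapping.lookup m v) (dg v))"

definition homog :: "('v::finite \<Rightarrow> 'g::ab_group_add) \<Rightarrow> 'g \<Rightarrow> ('v, 'k::zero) mpoly_pm set" where
  "homog dg w = {f. \<forall>m\<in>Poly_Mapping.keys f. mdeg dg m = w}"

definition hpart :: "('v::finite \<Rightarrow> 'g::ab_group_add) \<Rightarrow> 'g \<Rightarrow> ('v, 'k::zero) mpoly_pm \<Rightarrow> ('v, 'k) mpoly_pm" where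
  "hpart dg w f = Abs_poly_mapping (\<lambda>m. if mdeg dg m = w then Poly_Mapping.lookup f m else 0)"

definition const_pm :: "'k::zero \<Rightarrow> ('v, 'k) mpoly_pm" where
  "const_pm c = Poly_Mapping.single 0 c"

definition smult_pm :: "'k::semiring_0 \<Rightarrow> ('v, 'k) mpoly_pm \<Rightarrow> ('v, 'k) mpoly_pm" where
  "smult_pm c f = Poly_Mapping.map ((*) c) f"

definition omegaS :: "('v::finite \<Rightarrow> 'g::ab_group_add) \<Rightarrow> 'k::zero itself \<Rightarrow> 'g set" where
  "omegaS dg _ = {w. \<exists>f::('v,'k) mpoly_pm. f \<in> homog dg w \<and> f \<noteq> 0}"

text \<open>Elements of K (x) Q are represented by pairs (x, n), n > 0, standing for x (x) 1/n.\<close>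
definition tq_eq :: "'g::ab_group_add \<times> nat \<Rightarrow> 'g \<times> nat \<Rightarrow> bool" where
  "tq_eq p q \<longleftrightarrow> (\<exists>t>0. nsmul t (nsmul (snd q) (fst p) - nsmul (snd p) (fst q)) = 0)"

definition in_cone :: "'g::ab_group_add set \<Rightarrow> 'g \<times> nat \<Rightarrow> bool" where
  "in_cone A p \<longleftrightarrow> snd p > 0 \<and> (\<exists>F c d. finite F \<and> F \<subseteq> A \<and> d > (0::nat) \<and>
       tq_eq p (\<Sum>a\<in>F. nsmul (c a) a, d))"

definition cone_contains_line :: "'g::ab_group_add set \<Rightarrow> bool" where
  "cone_contains_line A \<longleftrightarrow> (\<exists>x n. n > 0 \<and> \<not> tq_eq (x, n) (0, 1) \<and>
       (\<forall>p::int. \<forall>q::nat. q > 0 \<longrightarrow> in_cone A (zsmul p x, q * n)))"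

definition effective :: "('v::finite \<Rightarrow> 'g::ab_group_add) \<Rightarrow> 'k::zero itself \<Rightarrow> bool" where
  "effective dg k \<longleftrightarrow> gen_subgroup (omegaS dg k) = UNIV"

definition pointed :: "('v::finite \<Rightarrow> 'g::ab_group_add) \<Rightarrow> 'k::zero itself \<Rightarrow> bool" where
  "pointed dg k \<longleftrightarrow> (homog dg 0 :: ('v,'k) mpoly_pm set) = range const_pm
      \<and> \<not> cone_contains_line (omegaS dg k)"

definition deg_le :: "('v::finite \<Rightarrow> 'g::ab_group_add) \<Rightarrow> 'k::zero itself \<Rightarrow> 'g \<Rightarrow> 'g \<Rightarrow> bool" where
  "deg_le dg k w' w \<longleftrightarrow> w - w' \<in> omegaS dg k"

definition deg_less :: "('v::finite \<Rightarrow> 'g::ab_group_add) \<Rightarrow> 'k::zero itself \<Rightarrow> 'g \<Rightarrow> 'g \<Rightarrow> bool" where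
  "deg_less dg k w' w \<longleftrightarrow> deg_le dg k w' w \<and> w' \<noteq> w"

inductive_set subalg :: "('v, 'k::comm_ring_1) mpoly_pm set \<Rightarrow> ('v, 'k) mpoly_pm set" for A where
  sa_const: "const_pm c \<in> subalg A"
| sa_gen: "a \<in> A \<Longrightarrow> a \<in> subalg A"
| sa_add: "a \<in> subalg A \<Longrightarrow> b \<in> subalg A \<Longrightarrow> a + b \<in> subalg A"
| sa_mult: "a \<in> subalg A \<Longrightarrow> b \<in> subalg A \<Longrightarrow> a * b \<in> subalg A"

inductive_set ideal_gen :: "('v, 'k::comm_ring_1) mpoly_pm set \<Rightarrow> ('v, 'k) mpoly_pm set" for A where
  ig_zero: "0 \<in> ideal_gen A"
| ig_gen: "a \<in> A \<Longrightarrow> a \<in> ideal_gen A"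
| ig_add: "a \<in> ideal_gen A \<Longrightarrow> b \<in> ideal_gen A \<Longrightarrow> a + b \<in> ideal_gen A"
| ig_mult: "a \<in> ideal_gen A \<Longrightarrow> r * a \<in> ideal_gen A"

definition is_ideal :: "('v, 'k::comm_ring_1) mpoly_pm set \<Rightarrow> bool" where
  "is_ideal I \<longleftrightarrow> 0 \<in> I \<and> (\<forall>a\<in>I. \<forall>b\<in>I. a + b \<in> I) \<and> (\<forall>r. \<forall>a\<in>I. r * a \<in> I)"

definition homogeneous_ideal :: "('v::finite \<Rightarrow> 'g::ab_group_add) \<Rightarrow> ('v, 'k::comm_ring_1) mpoly_pm set \<Rightarrow> bool" where
  "homogeneous_ideal dg I \<longleftrightarrow> is_ideal I \<and> (\<forall>f\<in>I. \<forall>w. hpart dg w f \<in> I)"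

definition OmegaS :: "('v::finite \<Rightarrow> 'g::ab_group_add) \<Rightarrow> 'k::comm_ring_1 itself \<Rightarrow> 'g set" where
  "OmegaS dg k = {w \<in> omegaS dg k.
     \<not> ((homog dg w :: ('v,'k) mpoly_pm set) \<subseteq> subalg (\<Union>w'\<in>{w'. deg_less dg k w' w}. homog dg w'))}"

definition OmegaI :: "('v::finite \<Rightarrow> 'g::ab_group_add) \<Rightarrow> ('v, 'k::comm_ring_1) mpoly_pm set \<Rightarrow> 'g set" where
  "OmegaI dg I = {w. \<not> (I \<inter> homog dg w \<subseteq>
       ideal_gen (\<Union>w'\<in>{w'. deg_less dg TYPE('k) w' w}. I \<inter> homog dg w'))}"

definition dsum_homog :: "('v::finite \<Rightarrow> 'g::ab_group_add) \<Rightarrow> 'g set \<Rightarrow> ('v, 'k::zero) mpoly_pm set" where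
  "dsum_homog dg D = {f. \<forall>m\<in>Poly_Mapping.keys f. mdeg dg m \<in> D}"

definition fin_dim :: "('v, 'k::field) mpoly_pm set \<Rightarrow> bool" where
  "fin_dim V \<longleftrightarrow> (\<exists>B. finite B \<and> B \<subseteq> V \<and> V \<subseteq> module.span smult_pm B)"

text \<open>Graded automorphisms (phi, psi) of S: phi a k-algebra automorphism, psi a group
  automorphism of K, with phi(S_w) = S_(psi w).\<close>
definition graded_aut :: "('v::finite \<Rightarrow> 'g::ab_group_add)
   \<Rightarrow> (('v, 'k::field) mpoly_pm \<Rightarrow> ('v, 'k) mpoly_pm) \<Rightarrow> ('g \<Rightarrow> 'g) \<Rightarrow> bool" where
  "graded_aut dg \<phi> \<psi> \<longleftrightarrow>
     bij \<phi> \<and> (\<forall>f g. \<phi> (f + g) = \<phi> f + \<phi> g) \<and> (\<forall>f g. \<phi> (f * g) = \<phi> f * \<phi> g)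
     \<and> \<phi> 1 = 1 \<and> (\<forall>c f. \<phi> (smult_pm c f) = smult_pm c (\<phi> f))
     \<and> bij \<psi> \<and> (\<forall>a b. \<psi> (a + b) = \<psi> a + \<psi> b)
     \<and> (\<forall>w. \<phi> ` homog dg w = homog dg (\<psi> w))"

definition alg_closed :: "'k::field itself \<Rightarrow> bool" where
  "alg_closed _ \<longleftrightarrow> (\<forall>p::'k poly. degree p > 0 \<longrightarrow> (\<exists>x. poly p x = 0))"

end

theory Submission
  imports Defs
begin

text \<open>
  Pointedness makes the degree of every nonconstant monomial nonzero, so the monomials of a
  fixed degree form an antichain for divisibility and are finite in number by Dickson's lemma.
  \<open>\<Omega>\<^sub>S\<close> consists of degrees of variables: a monomial of any other degree is a variable times a
  monomial, both of degree \<open>< w\<close>, whereas \<open>T\<^sub>v\<close> has no coefficient in anything generated by lower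
  degrees. \<open>\<Omega>\<^sub>I\<close> is contained in the degrees of the finitely many minimal leading monomials of
  homogeneous elements of \<open>I\<close> (Dickson again): in any other degree \<open>w\<close>, division by lower-degree
  elements of \<open>I\<close> shows \<open>I\<^sub>w \<subseteq> I\<^sub><\<^sub>w\<close>.
  A graded automorphism \<open>(\<phi>, \<psi>)\<close> maps \<open>S\<^sub>w\<close> onto \<open>S\<^sub>\<psi>\<^sub>(\<^sub>w\<^sub>)\<close> and preserves \<open>\<le>\<close>, hence permutes
  \<open>\<Omega>\<^sub>S\<close>. If \<open>\<phi>\<close> fixes \<open>V\<close>, it fixes all variables, so \<open>\<phi> = id\<close>; then \<open>\<psi>\<close> fixes all degrees of
  monomials, i.e. \<open>\<omega>(S)\<close>, which generates \<open>K\<close>.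
\<close>

section \<open>Monomials and their degrees\<close>

lemma nsmul_0 [simp]: "nsmul 0 x = 0"
  by (simp add: nsmul_def)

lemma nsmul_Suc [simp]: "nsmul (Suc n) x = x + nsmul n x"
  by (simp add: nsmul_def add.commute)

lemma nsmul_add: "nsmul (a + b) x = nsmul a x + nsmul b x"
  by (induction a) (simp_all add: add.assoc)

lemma (in additive) nsmul: "f (nsmul n x) = nsmul n (f x)"
  by (induction n) (simp_all add: add zero)

lemma mdeg_add: "mdeg dg (a + b) = mdeg dg a + mdeg dg b"
  by (simp add: mdeg_def lookup_add nsmul_add sum.distrib)

lemma mdeg_single [simp]: "mdeg dg (Poly_Mapping.single v n) = nsmul n (dg v)"
proof -
  have "mdeg dg (Poly_Mapping.single v n) = (\<Sum>u\<in>UNIV. if u = v then nsmul n (dg v) else 0)"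
    unfolding mdeg_def by (rule sum.cong) (auto simp: lookup_single when_def)
  then show ?thesis by simp
qed

lemma poly_mapping_sum_single:
  "(\<Sum>m\<in>Poly_Mapping.keys p. Poly_Mapping.single m (Poly_Mapping.lookup p m)) = p"
  by (rule poly_mapping_eqI) (auto simp: lookup_sum lookup_single when_def in_keys_iff)

lemma lookup_single_mult:
  fixes f :: "('a::cancel_comm_monoid_add) \<Rightarrow>\<^sub>0 ('b::comm_semiring_0)"
  shows "Poly_Mapping.lookup (Poly_Mapping.single t c * f) (t + m) = c * Poly_Mapping.lookup f m"
proof -
  have "Poly_Mapping.lookup (Poly_Mapping.single t c * f) (t + m)
     = Sum_any (\<lambda>l. c * Sum_any (\<lambda>q. Poly_Mapping.lookup f q when t + m = l + q) when l = t)"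
    unfolding lookup_mult by (rule Sum_any.cong) (simp add: lookup_single when_def)
  also have "\<dots> = c * Sum_any (\<lambda>q. Poly_Mapping.lookup f q when t + m = t + q)"
    by simp
  also have "Sum_any (\<lambda>q. Poly_Mapping.lookup f q when t + m = t + q)
      = Sum_any (\<lambda>q. Poly_Mapping.lookup f q when q = m)"
    by (rule Sum_any.cong) (auto simp: when_def)
  finally show ?thesis by simp
qed

lemma keys_single_mult:
  fixes f :: "('a::cancel_comm_monoid_add) \<Rightarrow>\<^sub>0 ('b::comm_semiring_0)"
  shows "Poly_Mapping.keys (Poly_Mapping.single t c * f) \<subseteq> (+) t ` Poly_Mapping.keys f"
  using keys_mult[of "Poly_Mapping.single t c" f] by (auto split: if_splits)

lemma single_eq_zero_iff [simp]: "Poly_Mapping.single k v = 0 \<longleftrightarrow> v = 0"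
  by (metis lookup_single_eq lookup_zero single_zero)

lemma le_monom_add_diff:
  assumes "\<And>v. Poly_Mapping.lookup b v \<le> Poly_Mapping.lookup (a::'v \<Rightarrow>\<^sub>0 nat) v"
  shows "b + (a - b) = a"
  by (rule poly_mapping_eqI) (simp add: lookup_add lookup_minus assms)

lemma dickson_lemma_on:
  fixes A :: "('v \<Rightarrow>\<^sub>0 nat) set"
  assumes "finite U"
  shows "\<exists>B\<subseteq>A. finite B \<and>
    (\<forall>a\<in>A. \<exists>b\<in>B. \<forall>v\<in>U. Poly_Mapping.lookup b v \<le> Poly_Mapping.lookup a v)"
  using assms
proof (induction U arbitrary: A rule: finite_induct)
  case empty
  show ?case
  proof (cases "A = {}")
    case False
    then obtain a where "a \<in> A"
      by blast
    then show ?thesis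
      by (intro exI[of _ "{a}"]) auto
  qed auto
next
  case (insert x U)
  let ?dominated = "\<lambda>B a. \<exists>b\<in>B. \<forall>v\<in>U. Poly_Mapping.lookup b v \<le> Poly_Mapping.lookup a v"
  have "\<forall>k. \<exists>Bk\<subseteq>{a\<in>A. Poly_Mapping.lookup a x = k}. finite Bk \<and>
     (\<forall>a\<in>{a\<in>A. Poly_Mapping.lookup a x = k}. ?dominated Bk a)"
    using insert.IH by blast
  then obtain Bx where Bx: "\<forall>k. Bx k \<subseteq> {a\<in>A. Poly_Mapping.lookup a x = k} \<and> finite (Bx k) \<and>
     (\<forall>a\<in>{a\<in>A. Poly_Mapping.lookup a x = k}. ?dominated (Bx k) a)"
    by (rule choice[THEN exE])
  obtain B0 where B0: "B0 \<subseteq> A" "finite B0" "\<forall>a\<in>A. ?dominated B0 a"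
    using insert.IH[of A] by blast
  \<comment> \<open>Elements of \<open>A\<close> whose \<open>x\<close>-exponent is at least that of all of \<open>B0\<close> are
    dominated by \<open>B0\<close>; the finitely many smaller exponents are handled by the \<open>Bx k\<close>.\<close>
  define N where "N = Max (insert 0 ((\<lambda>b. Poly_Mapping.lookup b x) ` B0))"
  define B where "B = B0 \<union> (\<Union>k<N. Bx k)"
  have "\<exists>b\<in>B. \<forall>v\<in>insert x U. Poly_Mapping.lookup b v \<le> Poly_Mapping.lookup a v" if "a \<in> A" for a
  proof (cases "Poly_Mapping.lookup a x < N")
    case True
    from Bx that obtain b where b: "b \<in> Bx (Poly_Mapping.lookup a x)"
      "\<forall>v\<in>U. Poly_Mapping.lookup b v \<le> Poly_Mapping.lookup a v"
      by blast
    moreover from b(1) Bx have "Poly_Mapping.lookup b x = Poly_Mapping.lookup a x"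
      by blast
    moreover from b(1) True have "b \<in> B"
      unfolding B_def by blast
    ultimately show ?thesis
      by (metis insert_iff order_refl)
  next
    case False
    from B0(3) that obtain b where b: "b \<in> B0"
      "\<forall>v\<in>U. Poly_Mapping.lookup b v \<le> Poly_Mapping.lookup a v"
      by blast
    moreover from b(1) B0(2) have "Poly_Mapping.lookup b x \<le> N"
      unfolding N_def by (intro Max_ge) auto
    moreover from b(1) have "b \<in> B"
      unfolding B_def by blast
    ultimately show ?thesis
      using False by (metis insert_iff le_trans not_less)
  qed
  moreover have "B \<subseteq> A"
    using B0(1) Bx unfolding B_def by blast
  moreover have "finite B"
    using B0(2) Bx unfolding B_def by blast
  ultimately show ?case
    by blast
qed

lemma dickson_lemma:
  "\<exists>B\<subseteq>A. finite B \<and>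
    (\<forall>a\<in>A. \<exists>b\<in>B. \<forall>v. Poly_Mapping.lookup b v \<le> Poly_Mapping.lookup (a::'v::finite \<Rightarrow>\<^sub>0 nat) v)"
  using dickson_lemma_on[of "UNIV::'v set" A] by simp

lemma homog_single: "Poly_Mapping.single m c \<in> homog dg (mdeg dg m)"
  by (simp add: homog_def)

definition var :: "'v \<Rightarrow> ('v, 'k::zero_neq_one) mpoly_pm"
  where "var v = Poly_Mapping.single (Poly_Mapping.single v 1) 1"

lemma var_in_homog: "var v \<in> homog dg (dg v)"
  using homog_single[of "Poly_Mapping.single v 1" 1 dg] by (simp add: var_def)

lemma single_eq_prod_var_powers:
  "Poly_Mapping.single m (1::'k::comm_semiring_1) = (\<Prod>v\<in>UNIV. var v ^ Poly_Mapping.lookup m v)"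
  for m :: "'v::finite \<Rightarrow>\<^sub>0 nat"
proof -
  have var_power: "var v ^ n = Poly_Mapping.single (Poly_Mapping.single v n) (1::'k)" for v n
    by (induction n) (simp_all add: var_def mult_single flip: single_add)
  have "(\<Prod>v\<in>A. var v ^ Poly_Mapping.lookup m v) =
      Poly_Mapping.single (\<Sum>v\<in>A. Poly_Mapping.single v (Poly_Mapping.lookup m v)) (1::'k)" for A
    by (induction A rule: infinite_finite_induct) (simp_all add: var_power mult_single)
  moreover have "(\<Sum>v\<in>UNIV. Poly_Mapping.single v (Poly_Mapping.lookup m v)) = m"
    by (rule poly_mapping_eqI) (simp add: lookup_sum lookup_single when_def)
  ultimately show ?thesis
    by simp
qed

lemma mdeg_in_omegaS: "mdeg dg m \<in> omegaS dg TYPE('k::zero_neq_one)"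
  unfolding omegaS_def
  by (intro CollectI exI[of _ "Poly_Mapping.single m (1::'k)"]) (simp add: homog_def)

lemma omegaS_iff_mdeg:
  fixes dg :: "'v::finite \<Rightarrow> 'g::ab_group_add"
  shows "w \<in> omegaS dg TYPE('k::zero_neq_one) \<longleftrightarrow> (\<exists>m. mdeg dg m = w)"
proof
  assume "w \<in> omegaS dg TYPE('k)"
  then obtain f :: "('v,'k) mpoly_pm" where "f \<in> homog dg w" "f \<noteq> 0"
    by (auto simp: omegaS_def)
  then obtain m where "m \<in> Poly_Mapping.keys f"
    by (metis all_not_in_conv keys_eq_empty)
  with \<open>f \<in> homog dg w\<close> show "\<exists>m. mdeg dg m = w"
    by (auto simp: homog_def)
qed (use mdeg_in_omegaS in blast)

lemma pointed_mdeg_eq_0: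
  assumes "pointed dg TYPE('k::zero_neq_one)" "mdeg dg m = 0"
  shows "m = 0"
proof -
  have "Poly_Mapping.single m (1::'k) \<in> homog dg 0"
    using homog_single[of m 1 dg] assms(2) by simp
  with assms(1) obtain c :: 'k where "Poly_Mapping.single m 1 = Poly_Mapping.single 0 c"
    by (auto simp: pointed_def const_pm_def)
  then have "Poly_Mapping.lookup (Poly_Mapping.single m (1::'k)) m = Poly_Mapping.lookup (Poly_Mapping.single 0 c) m"
    by simp
  then show "m = 0"
    by (auto simp: lookup_single when_def split: if_splits)
qed

lemma pointed_var_degree_neq_0:
  assumes "pointed dg TYPE('k::zero_neq_one)"
  shows "dg v \<noteq> 0"
  using pointed_mdeg_eq_0[OF assms, of "Poly_Mapping.single v 1"] by auto

lemma pointed_finite_monoms_of_degree: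
  assumes "pointed dg TYPE('k::zero_neq_one)"
  shows "finite {m. mdeg dg m = w}"
proof -
  obtain B where B: "B \<subseteq> {m. mdeg dg m = w}" "finite B"
    "\<forall>a\<in>{m. mdeg dg m = w}. \<exists>b\<in>B. \<forall>v. Poly_Mapping.lookup b v \<le> Poly_Mapping.lookup a v"
    using dickson_lemma[of "{m. mdeg dg m = w}"] by (elim exE conjE) blast
  have "a \<in> B" if a: "mdeg dg a = w" for a
  proof -
    obtain b where b: "b \<in> B" "\<And>v. Poly_Mapping.lookup b v \<le> Poly_Mapping.lookup a v"
      using B(3) a by blast
    have sum: "b + (a - b) = a"
      using b(2) by (rule le_monom_add_diff)
    have "mdeg dg b = w"
      using b(1) B(1) by blast
    then have "mdeg dg (a - b) = 0"
      using mdeg_add[of dg b "a - b"] sum a by simp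
    then have "a - b = 0"
      by (rule pointed_mdeg_eq_0[OF assms])
    with sum b(1) show "a \<in> B" by simp
  qed
  then have "{m. mdeg dg m = w} \<subseteq> B"
    by blast
  then show ?thesis
    using B(2) by (rule finite_subset)
qed

lemma smult_pm_eq_mult: "smult_pm c f = Poly_Mapping.single 0 c * f"
  by (simp add: smult_pm_def mult_map_scale_conv_mult)

lemma module_smult_pm: "module (smult_pm :: 'k::comm_ring_1 \<Rightarrow> ('v,'k) mpoly_pm \<Rightarrow> _)"
  by unfold_locales
    (simp_all add: smult_pm_eq_mult distrib_left distrib_right single_add mult_single
      flip: mult.assoc)

lemma fin_dim_dsum_homog:
  assumes "pointed dg TYPE('k::field)" "finite D"
  shows "fin_dim (dsum_homog dg D :: ('v::finite,'k) mpoly_pm set)"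
proof -
  interpret module "smult_pm :: 'k \<Rightarrow> ('v,'k) mpoly_pm \<Rightarrow> _"
    by (rule module_smult_pm)
  define M where "M = (\<Union>w\<in>D. {m. mdeg dg m = w})"
  have "finite M"
    unfolding M_def using assms pointed_finite_monoms_of_degree by blast
  have "f \<in> span ((\<lambda>m. Poly_Mapping.single m 1) ` M)" if f: "f \<in> dsum_homog dg D" for f
  proof -
    have "f = (\<Sum>m\<in>Poly_Mapping.keys f. smult_pm (Poly_Mapping.lookup f m) (Poly_Mapping.single m 1))"
      by (simp add: smult_pm_def poly_mapping_sum_single)
    also have "\<dots> \<in> span ((\<lambda>m. Poly_Mapping.single m 1) ` M)"
      using f by (intro span_sum span_scale span_base) (auto simp: dsum_homog_def M_def)
    finally show ?thesis .
  qed
  then show ?thesis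
    unfolding fin_dim_def using \<open>finite M\<close>
    by (intro exI[of _ "(\<lambda>m. Poly_Mapping.single m 1) ` M"]) (auto simp: dsum_homog_def M_def)
qed

section \<open>The set \<open>\<Omega>\<^sub>S\<close>\<close>

definition lower_subalg :: "('v::finite \<Rightarrow> 'g::ab_group_add) \<Rightarrow> 'k::comm_ring_1 itself \<Rightarrow> 'g \<Rightarrow> ('v,'k) mpoly_pm set"
  where "lower_subalg dg k w = subalg (\<Union>w'\<in>{w'. deg_less dg k w' w}. homog dg w')"

lemma OmegaS_iff:
  "w \<in> OmegaS dg k \<longleftrightarrow> w \<in> omegaS dg k \<and> \<not> homog dg w \<subseteq> lower_subalg dg k w"
  by (simp add: OmegaS_def lower_subalg_def)

lemma subalg_sum: "(\<And>x. x \<in> A \<Longrightarrow> f x \<in> subalg L) \<Longrightarrow> sum f A \<in> subalg L"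
proof (induction A rule: infinite_finite_induct)
  case (insert x F)
  then show ?case by (simp add: sa_add)
qed (use sa_const[of 0 L] in \<open>simp_all add: const_pm_def\<close>)

lemma subalg_mono:
  assumes "L \<subseteq> L'"
  shows "subalg L \<subseteq> subalg L'"
proof
  fix p assume "p \<in> subalg L"
  then show "p \<in> subalg L'"
    by induction (use assms in \<open>auto intro: subalg.intros\<close>)
qed

lemma homog_subset_subalg_iff_monoms:
  fixes L :: "('v::finite, 'k::comm_ring_1) mpoly_pm set"
  shows "homog dg w \<subseteq> subalg L \<longleftrightarrow> (\<forall>m c. mdeg dg m = w \<longrightarrow> Poly_Mapping.single m c \<in> subalg L)"
proof safe
  fix f :: "('v,'k) mpoly_pm" assume monoms: "\<forall>m c. mdeg dg m = w \<longrightarrow> Poly_Mapping.single m c \<in> subalg L"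
    and "f \<in> homog dg w"
  then have "(\<Sum>m\<in>Poly_Mapping.keys f. Poly_Mapping.single m (Poly_Mapping.lookup f m)) \<in> subalg L"
    by (intro subalg_sum) (auto simp: homog_def)
  then show "f \<in> subalg L"
    by (simp add: poly_mapping_sum_single)
qed (use homog_single in blast)

text \<open>A monomial of degree \<open>w\<close> that is not a variable splits off a variable \<open>T\<^sub>v\<close>; both
  factors have nonzero degree (pointedness), so both lie in degrees below \<open>w\<close>.\<close>
lemma OmegaS_subset_range:
  fixes dg :: "'v::finite \<Rightarrow> 'g::ab_group_add"
  assumes pointed: "pointed dg TYPE('k::field)"
  shows "OmegaS dg TYPE('k) \<subseteq> range dg"
proof
  fix w assume "w \<in> OmegaS dg TYPE('k)"
  show "w \<in> range dg"
  proof (rule ccontr)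
    assume not_var: "w \<notin> range dg"
    have "Poly_Mapping.single m c \<in> lower_subalg dg TYPE('k) w" if m: "mdeg dg m = w" for m and c :: 'k
    proof (cases "m = 0")
      case True
      then show ?thesis
        using sa_const[of c] by (simp add: lower_subalg_def const_pm_def)
    next
      case False
      then obtain v where "Poly_Mapping.lookup m v \<noteq> 0"
        by (metis poly_mapping_eqI lookup_zero)
      define m' where "m' = m - Poly_Mapping.single v 1"
      have m_eq: "Poly_Mapping.single v 1 + m' = m"
        unfolding m'_def using \<open>Poly_Mapping.lookup m v \<noteq> 0\<close>
        by (intro le_monom_add_diff) (auto simp: lookup_single when_def)
      have deg_m': "dg v + mdeg dg m' = w"
        using mdeg_add[of dg "Poly_Mapping.single v 1" m'] m_eq m by simp
      have "deg_less dg TYPE('k) (dg v) w"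
        using deg_m' not_var mdeg_in_omegaS[of dg m', where 'k='k]
        by (auto simp: deg_less_def deg_le_def algebra_simps)
      moreover have "deg_less dg TYPE('k) (mdeg dg m') w"
        using deg_m' pointed_var_degree_neq_0[OF pointed, of v]
          mdeg_in_omegaS[of dg "Poly_Mapping.single v 1", where 'k='k]
        by (auto simp: deg_less_def deg_le_def algebra_simps)
      ultimately have "var v \<in> (\<Union>w'\<in>{w'. deg_less dg TYPE('k) w' w}. homog dg w')"
        "Poly_Mapping.single m' c \<in> (\<Union>w'\<in>{w'. deg_less dg TYPE('k) w' w}. homog dg w')"
        using var_in_homog[of v dg] homog_single[of m' c dg] by auto
      then have "var v * Poly_Mapping.single m' c \<in> lower_subalg dg TYPE('k) w"
        unfolding lower_subalg_def by (intro sa_mult sa_gen)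
      then show ?thesis
        using m_eq by (simp add: var_def mult_single)
    qed
    then have "homog dg w \<subseteq> lower_subalg dg TYPE('k) w"
      unfolding lower_subalg_def homog_subset_subalg_iff_monoms by blast
    with \<open>w \<in> OmegaS dg TYPE('k)\<close> show False
      by (simp add: OmegaS_iff)
  qed
qed

lemma finite_OmegaS:
  fixes dg :: "'v::finite \<Rightarrow> 'g::ab_group_add"
  assumes "pointed dg TYPE('k::field)"
  shows "finite (OmegaS dg TYPE('k))"
  by (rule finite_subset[OF OmegaS_subset_range[OF assms]]) simp

lemma add_eq_single_1_imp_zero:
  assumes "a + b = Poly_Mapping.single v (1::nat)"
  shows "a = 0 \<or> b = 0"
proof -
  have lookups: "Poly_Mapping.lookup a u + Poly_Mapping.lookup b u = (if u = v then 1 else 0)" for u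
    using arg_cong[OF assms, of "\<lambda>x. Poly_Mapping.lookup x u"]
    by (simp add: lookup_add lookup_single when_def)
  then have "Poly_Mapping.lookup a v = 0 \<or> Poly_Mapping.lookup b v = 0"
    by (metis One_nat_def add_is_1)
  with lookups show ?thesis
    by (metis poly_mapping_eqI lookup_zero add_is_0)
qed

text \<open>Only \<open>0 + T\<^sub>v\<close> and \<open>T\<^sub>v + 0\<close> decompose the exponent of a variable.\<close>
lemma lookup_mult_var:
  fixes p q :: "('v, 'k::comm_ring_1) mpoly_pm" and v :: 'v
  defines "X \<equiv> Poly_Mapping.single v 1"
  shows "Poly_Mapping.lookup (p * q) X =
    Poly_Mapping.lookup p 0 * Poly_Mapping.lookup q X + Poly_Mapping.lookup p X * Poly_Mapping.lookup q 0"
proof -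
  define p' where "p' = p - Poly_Mapping.single 0 (Poly_Mapping.lookup p 0)"
  define q' where "q' = q - Poly_Mapping.single 0 (Poly_Mapping.lookup q 0)"
  have X_neq_0: "X \<noteq> 0"
    by (simp add: X_def)
  have "p * q = Poly_Mapping.single 0 (Poly_Mapping.lookup p 0) * q
      + Poly_Mapping.single 0 (Poly_Mapping.lookup q 0) * p' + p' * q'"
    by (simp add: p'_def q'_def algebra_simps mult_single)
  moreover have "Poly_Mapping.lookup (p' * q') X = 0"
  proof (rule ccontr)
    assume "Poly_Mapping.lookup (p' * q') X \<noteq> 0"
    then obtain c d where "X = c + d" "c \<in> Poly_Mapping.keys p'" "d \<in> Poly_Mapping.keys q'"
      using keys_mult[of p' q'] by (auto simp: in_keys_iff)
    moreover have "0 \<notin> Poly_Mapping.keys p'" "0 \<notin> Poly_Mapping.keys q'"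
      by (simp_all add: p'_def q'_def in_keys_iff lookup_minus)
    ultimately show False
      using add_eq_single_1_imp_zero[of c d v] by (auto simp: X_def)
  qed
  ultimately show ?thesis
    using lookup_single_mult[of 0 _ q X] lookup_single_mult[of 0 _ p' X] X_neq_0
    by (simp add: lookup_add p'_def lookup_minus lookup_single when_def mult.commute)
qed

lemma subalg_lookup_var_eq_0:
  fixes L :: "('v, 'k::comm_ring_1) mpoly_pm set"
  assumes "\<And>f. f \<in> L \<Longrightarrow> Poly_Mapping.lookup f (Poly_Mapping.single v 1) = 0"
    and "p \<in> subalg L"
  shows "Poly_Mapping.lookup p (Poly_Mapping.single v 1) = 0"
  using assms(2)
proof induction
  case (sa_mult a b)
  then show ?case
    by (simp only: lookup_mult_var) simp
qed (use assms(1) in \<open>simp_all add: lookup_add const_pm_def lookup_single\<close>)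

lemma var_degree_in_OmegaS:
  fixes dg :: "'v::finite \<Rightarrow> 'g::ab_group_add"
  shows "dg v \<in> OmegaS dg TYPE('k::field)"
proof -
  define X where "X = Poly_Mapping.single v (1::nat)"
  have "Poly_Mapping.lookup f X = 0"
    if "f \<in> (\<Union>w'\<in>{w'. deg_less dg TYPE('k) w' (dg v)}. homog dg w')" for f :: "('v,'k) mpoly_pm"
  proof (rule ccontr)
    assume "Poly_Mapping.lookup f X \<noteq> 0"
    then have "X \<in> Poly_Mapping.keys f"
      by (simp add: in_keys_iff)
    with that show False
      by (auto simp: X_def homog_def deg_less_def)
  qed
  then have "Poly_Mapping.lookup p X = 0" if "p \<in> lower_subalg dg TYPE('k) (dg v)" for p
    using that unfolding lower_subalg_def X_def by (rule subalg_lookup_var_eq_0)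
  moreover have "Poly_Mapping.lookup (var v :: ('v, 'k) mpoly_pm) X = 1"
    by (simp add: var_def X_def)
  ultimately have "(var v :: ('v, 'k) mpoly_pm) \<notin> lower_subalg dg TYPE('k) (dg v)"
    by fastforce
  then show ?thesis
    using var_in_homog[of v dg] mdeg_in_omegaS[of dg X, where 'k='k]
    by (auto simp: OmegaS_iff X_def)
qed

section \<open>The set \<open>\<Omega>\<^sub>I\<close>\<close>

lemma homog_diff: "f \<in> homog dg w \<Longrightarrow> g \<in> homog dg w \<Longrightarrow> f - g \<in> homog dg w"
  using keys_diff[of f g] by (auto simp: homog_def)

lemma homog_single_mult:
  fixes f :: "('v::finite, 'k::comm_semiring_0) mpoly_pm"
  shows "f \<in> homog dg u \<Longrightarrow> Poly_Mapping.single t c * f \<in> homog dg (mdeg dg t + u)"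
  using keys_single_mult[of t c f] by (auto simp: homog_def mdeg_add)

lemma is_ideal_diff:
  fixes I :: "('v, 'k::comm_ring_1) mpoly_pm set"
  assumes "is_ideal I" "a \<in> I" "b \<in> I"
  shows "a - b \<in> I"
proof -
  have "a + (- 1) * b \<in> I"
    using assms unfolding is_ideal_def by blast
  then show ?thesis
    by simp
qed

definition lower_ideal :: "('v::finite \<Rightarrow> 'g::ab_group_add) \<Rightarrow> ('v, 'k::comm_ring_1) mpoly_pm set \<Rightarrow> 'g \<Rightarrow> ('v,'k) mpoly_pm set"
  where "lower_ideal dg I w = ideal_gen (\<Union>w'\<in>{w'. deg_less dg TYPE('k) w' w}. I \<inter> homog dg w')"

lemma OmegaI_iff: "w \<in> OmegaI dg I \<longleftrightarrow> \<not> I \<inter> homog dg w \<subseteq> lower_ideal dg I w"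
  by (simp add: OmegaI_def lower_ideal_def)

lemma ex_additive_inj_monom_embedding:
  "\<exists>key :: ('v::finite \<Rightarrow>\<^sub>0 nat) \<Rightarrow> (nat \<Rightarrow>\<^sub>0 nat). inj key \<and> (\<forall>a b. key (a + b) = key a + key b)"
proof -
  obtain \<iota> :: "'v \<Rightarrow> nat" where "inj \<iota>"
    using finite_imp_inj_to_nat_seg[of "UNIV :: 'v set"] by auto
  define key where "key m = Abs_poly_mapping
    (\<lambda>i. if i \<in> range \<iota> then Poly_Mapping.lookup m (inv \<iota> i) else 0)" for m :: "'v \<Rightarrow>\<^sub>0 nat"
  have lookup_key: "Poly_Mapping.lookup (key m) i =
      (if i \<in> range \<iota> then Poly_Mapping.lookup m (inv \<iota> i) else 0)" for m i
  proof -
    have "finite {i. (if i \<in> range \<iota> then Poly_Mapping.lookup m (inv \<iota> i) else 0) \<noteq> 0}"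
      by (rule finite_subset[of _ "range \<iota>"]) auto
    then show ?thesis
      by (simp add: key_def)
  qed
  have "inj key"
  proof (rule injI)
    fix a b assume "key a = key b"
    then have "Poly_Mapping.lookup (key a) (\<iota> v) = Poly_Mapping.lookup (key b) (\<iota> v)" for v
      by simp
    then show "a = b"
      using \<open>inj \<iota>\<close> by (intro poly_mapping_eqI) (simp add: lookup_key)
  qed
  moreover have "key (a + b) = key a + key b" for a b
    by (rule poly_mapping_eqI) (simp add: lookup_key lookup_add)
  ultimately show ?thesis by blast
qed

text \<open>An injective additive map into a linearly ordered semigroup: a monomial order without
  well-foundedness, which is all the division argument below needs.\<close>
locale monomial_key =
  fixes key :: "('v::finite \<Rightarrow>\<^sub>0 nat) \<Rightarrow> 'o::{linorder, ordered_ab_semigroup_add}"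
  assumes inj_key: "inj key"
    and key_add: "key (a + b) = key a + key b"
begin

definition lead_monoms :: "('v \<Rightarrow> 'g::ab_group_add) \<Rightarrow> ('v, 'k::zero) mpoly_pm set \<Rightarrow> ('v \<Rightarrow>\<^sub>0 nat) set"
  where "lead_monoms dg I = {a. \<exists>g u. g \<in> I \<inter> homog dg u \<and> a \<in> Poly_Mapping.keys g \<and>
    (\<forall>a'\<in>Poly_Mapping.keys g. key a' \<le> key a)}"

lemma ex_lead_monom:
  assumes "g \<noteq> 0"
  obtains a where "a \<in> Poly_Mapping.keys g" "\<forall>a'\<in>Poly_Mapping.keys g. key a' \<le> key a"
proof -
  have "Max (key ` Poly_Mapping.keys g) \<in> key ` Poly_Mapping.keys g"
    using assms by (intro Max_in) auto
  then obtain a where "a \<in> Poly_Mapping.keys g" "key a = Max (key ` Poly_Mapping.keys g)"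
    by (metis imageE)
  then show ?thesis
    by (intro that) auto
qed

text \<open>One step of multivariate division: if a leading monomial \<open>b\<close> of lower degree divides the
  leading monomial \<open>a\<close> of \<open>g\<close>, a multiple of the corresponding element of \<open>I\<close> cancels \<open>a\<close>.\<close>
lemma reduce_lead_monom:
  fixes I :: "('v, 'k::field) mpoly_pm set"
  assumes I: "is_ideal I"
    and g: "g \<in> I \<inter> homog dg w" "a \<in> Poly_Mapping.keys g" "\<forall>a'\<in>Poly_Mapping.keys g. key a' \<le> key a"
    and b: "b \<in> lead_monoms dg I" "\<And>v. Poly_Mapping.lookup b v \<le> Poly_Mapping.lookup a v"
      "mdeg dg b \<noteq> w"
  shows "\<exists>h \<in> I \<inter> lower_ideal dg I w. g - h \<in> homog dg w \<and>
    (\<forall>k\<in>Poly_Mapping.keys (g - h). key k < key a)"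
proof -
  obtain f u where f: "f \<in> I \<inter> homog dg u" "b \<in> Poly_Mapping.keys f"
    "\<forall>b'\<in>Poly_Mapping.keys f. key b' \<le> key b"
    using b(1) by (auto simp: lead_monoms_def)
  then have f_homog: "f \<in> homog dg (mdeg dg b)"
    by (auto simp: homog_def)
  define t where "t = a - b"
  have bt: "b + t = a"
    unfolding t_def using b(2) by (rule le_monom_add_diff)
  have deg: "mdeg dg t + mdeg dg b = w"
    using g(1,2) bt mdeg_add[of dg b t] by (auto simp: homog_def add.commute)
  have "deg_less dg TYPE('k) (mdeg dg b) w"
    using deg b(3) mdeg_in_omegaS[of dg t] by (auto simp: deg_less_def deg_le_def algebra_simps)
  with f f_homog have f_lower: "f \<in> lower_ideal dg I w"
    unfolding lower_ideal_def by (blast intro: ig_gen)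
  define h where "h = Poly_Mapping.single t (Poly_Mapping.lookup g a / Poly_Mapping.lookup f b) * f"
  have "h \<in> I"
    using I f(1) by (simp add: h_def is_ideal_def)
  moreover have "h \<in> lower_ideal dg I w"
    unfolding h_def lower_ideal_def using f_lower[unfolded lower_ideal_def] by (rule ig_mult)
  moreover have "g - h \<in> homog dg w"
    using g(1) homog_single_mult[OF f_homog, of t] deg by (auto simp: h_def intro: homog_diff)
  moreover have "key k < key a" if k: "k \<in> Poly_Mapping.keys (g - h)" for k
  proof -
    have "Poly_Mapping.lookup h a = Poly_Mapping.lookup g a"
      using lookup_single_mult[of t _ f b] f(2) bt by (simp add: h_def in_keys_iff add.commute)
    then have "k \<noteq> a"
      using k by (auto simp: in_keys_iff lookup_minus)
    moreover have "key k \<le> key a"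
    proof (cases "k \<in> Poly_Mapping.keys g")
      case False
      with k keys_diff[of g h] have "k \<in> Poly_Mapping.keys h"
        by blast
      then obtain m where m: "m \<in> Poly_Mapping.keys f" "k = t + m"
        using keys_single_mult[of t _ f] by (auto simp: h_def)
      then have "key k = key t + key m"
        by (simp add: key_add)
      also have "\<dots> \<le> key t + key b"
        using f(3) m(1) by (simp add: add_left_mono)
      also have "\<dots> = key a"
        using bt key_add[of b t] by (simp add: add.commute)
      finally show ?thesis .
    qed (use g(3) in blast)
    ultimately show ?thesis
      using inj_key by (metis injD order_less_le)
  qed
  ultimately show ?thesis
    by blast
qed

definition monoms_below :: "('v \<Rightarrow> 'g::ab_group_add) \<Rightarrow> 'g \<Rightarrow> ('v, 'k::zero) mpoly_pm \<Rightarrow> ('v \<Rightarrow>\<^sub>0 nat) set"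
  where "monoms_below dg w g = {m. mdeg dg m = w \<and> (\<exists>k\<in>Poly_Mapping.keys g. key m \<le> key k)}"

lemma monoms_below_psubset:
  assumes "a \<in> Poly_Mapping.keys g" "mdeg dg a = w" "\<forall>k\<in>Poly_Mapping.keys g'. key k < key a"
  shows "monoms_below dg w g' \<subset> monoms_below dg w g"
proof
  show "monoms_below dg w g' \<subseteq> monoms_below dg w g"
  proof
    fix m assume "m \<in> monoms_below dg w g'"
    then obtain k where "mdeg dg m = w" "k \<in> Poly_Mapping.keys g'" "key m \<le> key k"
      by (auto simp: monoms_below_def)
    with assms(3) have "key m \<le> key a"
      by (meson less_imp_le order_trans)
    with \<open>mdeg dg m = w\<close> assms(1) show "m \<in> monoms_below dg w g"
      by (auto simp: monoms_below_def)
  qed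
  have "a \<in> monoms_below dg w g"
    using assms(1,2) by (auto simp: monoms_below_def)
  moreover have "a \<notin> monoms_below dg w g'"
    using assms(3) by (auto simp: monoms_below_def dest: leD)
  ultimately show "monoms_below dg w g' \<noteq> monoms_below dg w g"
    by blast
qed

text \<open>Reduction terminates because it shrinks \<open>monoms_below dg w g\<close>, a subset of the finite
  set of monomials of degree \<open>w\<close>.\<close>
lemma homog_part_subset_lower_ideal:
  fixes I :: "('v, 'k::field) mpoly_pm set"
  assumes pointed: "pointed dg TYPE('k)" and I: "is_ideal I"
    and B: "B \<subseteq> lead_monoms dg I"
      "\<forall>a\<in>lead_monoms dg I. \<exists>b\<in>B. \<forall>v. Poly_Mapping.lookup b v \<le> Poly_Mapping.lookup a v"
    and w: "w \<notin> mdeg dg ` B"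
  shows "I \<inter> homog dg w \<subseteq> lower_ideal dg I w"
proof
  fix g assume "g \<in> I \<inter> homog dg w"
  have finite_below: "finite (monoms_below dg w g)" for g :: "('v, 'k) mpoly_pm"
    unfolding monoms_below_def
    by (rule finite_subset[OF _ pointed_finite_monoms_of_degree[OF pointed, of w]]) auto
  show "g \<in> lower_ideal dg I w"
    using \<open>g \<in> I \<inter> homog dg w\<close>
  proof (induction g rule: measure_induct_rule[of "\<lambda>g. card (monoms_below dg w g)"])
    case (less g)
    show ?case
    proof (cases "g = 0")
      case True
      then show ?thesis
        by (simp add: lower_ideal_def ig_zero)
    next
      case False
      then obtain a where a: "a \<in> Poly_Mapping.keys g" "\<forall>a'\<in>Poly_Mapping.keys g. key a' \<le> key a"
        by (rule ex_lead_monom)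
      then have "a \<in> lead_monoms dg I"
        using less.prems by (auto simp: lead_monoms_def)
      with B obtain b where "b \<in> B" "\<And>v. Poly_Mapping.lookup b v \<le> Poly_Mapping.lookup a v"
        by blast
      with reduce_lead_monom[OF I less.prems a] B(1) w obtain h where
        h: "h \<in> I \<inter> lower_ideal dg I w" "g - h \<in> homog dg w"
          "\<forall>k\<in>Poly_Mapping.keys (g - h). key k < key a"
        by blast
      have "mdeg dg a = w"
        using less.prems a(1) by (auto simp: homog_def)
      with a(1) h(3) have "card (monoms_below dg w (g - h)) < card (monoms_below dg w g)"
        by (intro psubset_card_mono finite_below monoms_below_psubset)
      moreover have "g - h \<in> I \<inter> homog dg w"
        using I less.prems h(1,2) is_ideal_diff by blast
      ultimately have "g - h \<in> lower_ideal dg I w"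
        by (rule less.IH)
      then have "(g - h) + h \<in> lower_ideal dg I w"
        using h(1) unfolding lower_ideal_def by (blast intro: ig_add)
      then show ?thesis
        by simp
    qed
  qed
qed

end

lemma finite_OmegaI:
  fixes dg :: "'v::finite \<Rightarrow> 'g::ab_group_add" and I :: "('v, 'k::field) mpoly_pm set"
  assumes "pointed dg TYPE('k)" "is_ideal I"
  shows "finite (OmegaI dg I)"
proof -
  obtain key :: "('v \<Rightarrow>\<^sub>0 nat) \<Rightarrow> (nat \<Rightarrow>\<^sub>0 nat)" where "monomial_key key"
    using ex_additive_inj_monom_embedding by (auto intro: monomial_key.intro)
  then interpret monomial_key key .
  obtain B where B: "B \<subseteq> lead_monoms dg I" "finite B"
    "\<forall>a\<in>lead_monoms dg I. \<exists>b\<in>B. \<forall>v. Poly_Mapping.lookup b v \<le> Poly_Mapping.lookup a v"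
    using dickson_lemma[of "lead_monoms dg I"] by (elim exE conjE) blast
  have "OmegaI dg I \<subseteq> mdeg dg ` B"
  proof
    fix w assume "w \<in> OmegaI dg I"
    then show "w \<in> mdeg dg ` B"
      using homog_part_subset_lower_ideal[OF assms B(1,3), of w] by (auto simp: OmegaI_iff)
  qed
  then show ?thesis
    using B(2) by (simp add: finite_subset)
qed

section \<open>Graded automorphisms\<close>

lemma dsum_homog_sum:
  "(\<And>x. x \<in> A \<Longrightarrow> f x \<in> dsum_homog dg D) \<Longrightarrow> sum f A \<in> dsum_homog dg D"
proof (induction A rule: infinite_finite_induct)
  case (insert x F)
  then show ?case
    using keys_add[of "f x" "sum f F"] by (auto simp: dsum_homog_def)
qed (simp_all add: dsum_homog_def)

lemma homog_subset_dsum_homog: "u \<in> D \<Longrightarrow> homog dg u \<subseteq> dsum_homog dg D"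
  by (auto simp: homog_def dsum_homog_def)

lemma additive_fixes_gen_subgroup:
  fixes f :: "'g::ab_group_add \<Rightarrow> 'g"
  assumes "additive f" "\<And>a. a \<in> A \<Longrightarrow> f a = a" "x \<in> gen_subgroup A"
  shows "f x = x"
  using assms(3)
  by induction (simp_all add: assms(2) additive.zero[OF assms(1)] additive.add[OF assms(1)]
      additive.minus[OF assms(1)])

locale graded_automorphism =
  fixes dg :: "'v::finite \<Rightarrow> 'g::ab_group_add"
    and \<phi> :: "('v, 'k::field) mpoly_pm \<Rightarrow> ('v, 'k) mpoly_pm"
    and \<psi> :: "'g \<Rightarrow> 'g"
  assumes graded_aut: "graded_aut dg \<phi> \<psi>"
begin

sublocale phi: additive \<phi>
  using graded_aut by unfold_locales (simp add: graded_aut_def)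

sublocale psi: additive \<psi>
  using graded_aut by unfold_locales (simp add: graded_aut_def)

lemma phi_mult: "\<phi> (f * g) = \<phi> f * \<phi> g"
  and phi_one: "\<phi> 1 = 1"
  and phi_smult: "\<phi> (smult_pm c f) = smult_pm c (\<phi> f)"
  and inj_phi: "inj \<phi>"
  and surj_psi: "surj \<psi>"
  and image_homog: "\<phi> ` homog dg w = homog dg (\<psi> w)"
  using graded_aut by (simp_all add: graded_aut_def bij_def)

lemma inj_psi: "inj \<psi>"
  using graded_aut by (simp add: graded_aut_def bij_def)

lemma phi_const: "\<phi> (const_pm c) = const_pm c"
  using phi_smult[of c 1] by (simp add: phi_one smult_pm_eq_mult const_pm_def)

lemma phi_prod: "\<phi> (prod f A) = (\<Prod>x\<in>A. \<phi> (f x))"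
  by (induction A rule: infinite_finite_induct) (simp_all add: phi_one phi_mult)

lemma phi_power: "\<phi> (x ^ n) = \<phi> x ^ n"
  by (induction n) (simp_all add: phi_one phi_mult)

lemma omegaS_image_iff: "\<psi> w \<in> omegaS dg TYPE('k) \<longleftrightarrow> w \<in> omegaS dg TYPE('k)"
proof
  assume "\<psi> w \<in> omegaS dg TYPE('k)"
  then obtain g :: "('v, 'k) mpoly_pm" where "g \<in> homog dg (\<psi> w)" "g \<noteq> 0"
    by (auto simp: omegaS_def)
  then show "w \<in> omegaS dg TYPE('k)"
    unfolding omegaS_def by (auto simp flip: image_homog simp: phi.zero)
next
  assume "w \<in> omegaS dg TYPE('k)"
  then obtain f :: "('v, 'k) mpoly_pm" where "f \<in> homog dg w" "f \<noteq> 0"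
    by (auto simp: omegaS_def)
  moreover from \<open>f \<noteq> 0\<close> have "\<phi> f \<noteq> 0"
    using inj_phi phi.zero by (metis injD)
  ultimately show "\<psi> w \<in> omegaS dg TYPE('k)"
    unfolding omegaS_def by (auto simp flip: image_homog)
qed

lemma deg_less_image_iff:
  "deg_less dg TYPE('k) (\<psi> u) (\<psi> w) \<longleftrightarrow> deg_less dg TYPE('k) u w"
  using omegaS_image_iff[of "w - u"] inj_psi
  by (auto simp: deg_less_def deg_le_def psi.diff injD)

lemma subalg_image: "subalg (\<phi> ` L) \<subseteq> \<phi> ` subalg L"
proof
  fix p assume "p \<in> subalg (\<phi> ` L)"
  then show "p \<in> \<phi> ` subalg L"
  proof induction
    case (sa_const c)
    show ?case
      by (rule image_eqI[of _ _ "const_pm c"]) (simp_all add: phi_const subalg.sa_const)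
  next
    case (sa_add a b)
    then obtain x y where "x \<in> subalg L" "a = \<phi> x" "y \<in> subalg L" "b = \<phi> y"
      by blast
    then show ?case
      by (metis phi.add image_eqI subalg.sa_add)
  next
    case (sa_mult a b)
    then obtain x y where "x \<in> subalg L" "a = \<phi> x" "y \<in> subalg L" "b = \<phi> y"
      by blast
    then show ?case
      by (metis phi_mult image_eqI subalg.sa_mult)
  qed (auto intro: sa_gen)
qed

lemma lower_subalg_image: "lower_subalg dg TYPE('k) (\<psi> w) \<subseteq> \<phi> ` lower_subalg dg TYPE('k) w"
proof -
  have "(\<Union>w'\<in>{w'. deg_less dg TYPE('k) w' (\<psi> w)}. homog dg w')
      \<subseteq> \<phi> ` (\<Union>w'\<in>{w'. deg_less dg TYPE('k) w' w}. homog dg w')"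
  proof safe
    fix x :: "('v, 'k) mpoly_pm" and w' assume "deg_less dg TYPE('k) w' (\<psi> w)" "x \<in> homog dg w'"
    moreover obtain u where "w' = \<psi> u"
      using surj_psi by (metis surjD)
    ultimately show "x \<in> \<phi> ` (\<Union>w'\<in>{w'. deg_less dg TYPE('k) w' w}. homog dg w')"
      by (auto simp: deg_less_image_iff simp flip: image_homog)
  qed
  then show ?thesis
    unfolding lower_subalg_def using subalg_mono subalg_image by blast
qed

lemma OmegaS_image:
  assumes "w \<in> OmegaS dg TYPE('k)"
  shows "\<psi> w \<in> OmegaS dg TYPE('k)"
proof -
  have "\<psi> w \<in> omegaS dg TYPE('k)"
    using assms by (simp add: OmegaS_iff omegaS_image_iff)
  moreover have "\<not> homog dg (\<psi> w) \<subseteq> lower_subalg dg TYPE('k) (\<psi> w)"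
  proof
    assume "homog dg (\<psi> w) \<subseteq> lower_subalg dg TYPE('k) (\<psi> w)"
    then have "\<phi> ` homog dg w \<subseteq> \<phi> ` lower_subalg dg TYPE('k) w"
      using lower_subalg_image by (auto simp: image_homog)
    then have "homog dg w \<subseteq> lower_subalg dg TYPE('k) w"
      using inj_phi by (simp add: inj_image_subset_iff)
    with assms show False
      by (simp add: OmegaS_iff)
  qed
  ultimately show ?thesis
    by (simp add: OmegaS_iff)
qed

lemma image_dsum_homog_subset:
  assumes "\<psi> ` D \<subseteq> D"
  shows "\<phi> ` dsum_homog dg D \<subseteq> dsum_homog dg D"
proof safe
  fix f :: "('v, 'k) mpoly_pm" assume f: "f \<in> dsum_homog dg D"
  have "\<phi> f = (\<Sum>m\<in>Poly_Mapping.keys f. \<phi> (Poly_Mapping.single m (Poly_Mapping.lookup f m)))"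
    by (simp flip: phi.sum add: poly_mapping_sum_single)
  also have "\<dots> \<in> dsum_homog dg D"
  proof (rule dsum_homog_sum)
    fix m assume "m \<in> Poly_Mapping.keys f"
    then have "\<psi> (mdeg dg m) \<in> D"
      using f assms by (auto simp: dsum_homog_def)
    moreover have "\<phi> (Poly_Mapping.single m (Poly_Mapping.lookup f m)) \<in> homog dg (\<psi> (mdeg dg m))"
      using homog_single by (auto simp flip: image_homog)
    ultimately show "\<phi> (Poly_Mapping.single m (Poly_Mapping.lookup f m)) \<in> dsum_homog dg D"
      using homog_subset_dsum_homog by blast
  qed
  finally show "\<phi> f \<in> dsum_homog dg D" .
qed

lemma image_dsum_OmegaS:
  "\<phi> ` dsum_homog dg (OmegaS dg TYPE('k)) \<subseteq> dsum_homog dg (OmegaS dg TYPE('k))"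
  using OmegaS_image by (intro image_dsum_homog_subset) blast

lemma phi_eq_id_if_fixes_vars:
  assumes "\<And>v. \<phi> (var v) = var v"
  shows "\<phi> = id"
proof
  fix p
  have "\<phi> (Poly_Mapping.single m 1) = Poly_Mapping.single m 1" for m
    unfolding single_eq_prod_var_powers by (simp add: phi_prod phi_power assms)
  then have "\<phi> (Poly_Mapping.single m c) = Poly_Mapping.single m c" for m c
    using phi_smult[of c "Poly_Mapping.single m 1"] by (simp add: smult_pm_def)
  then have "\<phi> (\<Sum>m\<in>Poly_Mapping.keys p. Poly_Mapping.single m (Poly_Mapping.lookup p m))
      = (\<Sum>m\<in>Poly_Mapping.keys p. Poly_Mapping.single m (Poly_Mapping.lookup p m))"
    by (simp add: phi.sum)
  then show "\<phi> p = id p"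
    by (simp add: poly_mapping_sum_single)
qed

lemma psi_eq_id_if_fixes_vars:
  assumes eff: "effective dg TYPE('k)" and fixes_vars: "\<And>v. \<phi> (var v) = var v"
  shows "\<psi> = id"
proof
  have "(var v :: ('v, 'k) mpoly_pm) \<in> homog dg (\<psi> (dg v))" for v
    using imageI[OF var_in_homog[of v dg], of \<phi>] by (simp add: image_homog fixes_vars)
  then have "\<psi> (dg v) = dg v" for v
    by (simp add: homog_def var_def)
  then have "\<psi> (mdeg dg m) = mdeg dg m" for m
    by (simp add: mdeg_def psi.sum psi.nsmul)
  then have "\<psi> w = w" if "w \<in> omegaS dg TYPE('k)" for w
    using that by (auto simp: omegaS_iff_mdeg)
  then show "\<psi> a = id a" for a
    using eff additive_fixes_gen_subgroup[OF psi.additive_axioms] by (auto simp: effective_def)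
qed

lemma fixes_dsum_OmegaS_imp_id:
  assumes "effective dg TYPE('k)"
    and "\<forall>f\<in>dsum_homog dg (OmegaS dg TYPE('k)). \<phi> f = f"
  shows "\<phi> = id \<and> \<psi> = id"
proof -
  have "(var v :: ('v, 'k) mpoly_pm) \<in> dsum_homog dg (OmegaS dg TYPE('k))" for v
    by (rule subsetD[OF homog_subset_dsum_homog[OF var_degree_in_OmegaS] var_in_homog])
  then have "\<phi> (var v) = var v" for v
    using assms(2) by blast
  then show ?thesis
    by (intro conjI phi_eq_id_if_fixes_vars psi_eq_id_if_fixes_vars[OF assms(1)])
qed

end

theorem mainTheorem5:
  fixes dg :: "'v::finite \<Rightarrow> 'g::ab_group_add"
    and I :: "('v, 'k::field_char_0) mpoly_pm set"
  assumes "alg_closed TYPE('k)"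
    and "fin_gen_group TYPE('g)"
    and "effective dg TYPE('k)"
    and "pointed dg TYPE('k)"
    and "homogeneous_ideal dg I"
  shows "fin_dim (dsum_homog dg (OmegaS dg TYPE('k)) :: ('v,'k) mpoly_pm set)
    \<and> fin_dim (dsum_homog dg (OmegaI dg I) :: ('v,'k) mpoly_pm set)
    \<and> (\<forall>(\<phi> :: (('v,'k) mpoly_pm \<Rightarrow> ('v,'k) mpoly_pm)) \<psi>. graded_aut dg \<phi> \<psi> \<longrightarrow>
          \<phi> ` (dsum_homog dg (OmegaS dg TYPE('k))) \<subseteq> dsum_homog dg (OmegaS dg TYPE('k)))
    \<and> (\<forall>(\<phi> :: (('v,'k) mpoly_pm \<Rightarrow> ('v,'k) mpoly_pm)) \<psi>. graded_aut dg \<phi> \<psi> \<longrightarrow>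
          (\<forall>f\<in>dsum_homog dg (OmegaS dg TYPE('k)). \<phi> f = f) \<longrightarrow> \<phi> = id \<and> \<psi> = id)"
proof -
  have "is_ideal I"
    using assms(5) by (simp add: homogeneous_ideal_def)
  moreover have "graded_automorphism dg \<phi> \<psi> \<longleftrightarrow> graded_aut dg \<phi> \<psi>"
    for \<phi> :: "('v, 'k) mpoly_pm \<Rightarrow> ('v, 'k) mpoly_pm" and \<psi>
    by (simp add: graded_automorphism_def)
  ultimately show ?thesis
    using fin_dim_dsum_homog[OF assms(4) finite_OmegaS[OF assms(4)]]
      fin_dim_dsum_homog[OF assms(4) finite_OmegaI[OF assms(4)]]
      graded_automorphism.image_dsum_OmegaS[where 'k='k]
      graded_automorphism.fixes_dsum_OmegaS_imp_id[OF _ assms(3)]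
    by metis
qed

end
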